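(* Let $(E,\mathsf{E},\mu)$ and $(\Omega,\mathsf{F},\mathbb{P})$ be probability spaces, with $(E,\mathsf{E},\mu)$ complete, and let $X$ be a separable Hadamard space. Let $f:E\times X\to(-\infty,+\infty]$ be a normal convex integrand such that $\underline{f}(x):=\int f(e,x)\,d\mu(e)$ is proper and $\mathrm{argmin}\,\underline{f}\neq\emptyset$; write $F(x):=\underline{f}(x)-\min\underline{f}$. Let $x_0\in X$, let $(\lambda_n)$ be positive reals with $\sum_n\lambda_n=\infty$, $\sum_n\lambda_n^2<\infty$, let $(\xi_{n+1})_{n\in\mathbb{N}}$ be i.i.d.\ random variables $\Omega\to E$ with distribution $\mu$, and let $x_{n+1}:=\mathrm{prox}^f_{\lambda_n}(\xi_{n+1},x_n)$. Assume there is a positive $L\in L^2(E,\mu)$ with $f(e,x)-f(e,y)\le L(e)d(x,y)$ for all $x,y\in X$ and $\mu$-almost all $e$, and set $\underline{L}:=\int L^2\,d\mu$. Let $z\in\mathrm{argmin}\,\underline{f}$ and $b>d^2(x_0,z)$, let $\theta:\mathbb{N}\times(0,\infty)\to\mathbb{N}$ satisfy $\sum_{n=k}^{\theta(k,b')}\lambda_n\ge b'$ for all $b'>0$, $k\in\mathbb{N}$, and let $T>\sum_{n=0}^\infty\lambda_n^2$. Then for all $\varepsilon>0$ and $N\in\mathbb{N}$ there exists $n\in\mathbb{N}$ with $N\le n\le\theta(N,(b+4\underline{L}T)/\varepsilon)$ and $\mathbb{E}[F(x_n)]<\varepsilon$.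
   Context: A Hadamard space is a complete geodesic metric space $(X,d)$ satisfying, for all $x\in X$, $t\in[0,1]$ and geodesics $\gamma:[0,l]\to X$, $d^2(\gamma(tl),x)\le(1-t)d^2(\gamma(0),x)+td^2(\gamma(l),x)-t(1-t)d^2(\gamma(0),\gamma(l))$. A normal convex integrand is a $\mathsf{E}\otimes\mathsf{B}(X)$-measurable $f:E\times X\to(-\infty,+\infty]$ with each $f(e,\cdot)$ proper, lower semicontinuous and convex (along geodesics). $\mathrm{prox}^f_\lambda(e,x):=\mathrm{argmin}_{y\in X}\{f(e,y)+\frac1{2\lambda}d^2(x,y)\}$. *)

theory Defs
  imports "HOL-Probability.Probability"
begin

definition geodesic :: "(real \<Rightarrow> 'a::metric_space) \<Rightarrow> real \<Rightarrow> bool" where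
  "geodesic \<gamma> l \<longleftrightarrow> 0 \<le> l \<and>
     (\<forall>s\<in>{0..l}. \<forall>t\<in>{0..l}. dist (\<gamma> s) (\<gamma> t) = \<bar>s - t\<bar>)"

definition geodesic_space :: "'a::metric_space itself \<Rightarrow> bool" where
  "geodesic_space _ \<longleftrightarrow>
     (\<forall>x y::'a. \<exists>\<gamma>. geodesic \<gamma> (dist x y) \<and> \<gamma> 0 = x \<and> \<gamma> (dist x y) = y)"

definition hadamard_space :: "'a::metric_space itself \<Rightarrow> bool" where
  "hadamard_space T \<longleftrightarrow> Topological_Spaces.complete (UNIV :: 'a set) \<and> geodesic_space T \<and>
     (\<forall>(\<gamma>::real \<Rightarrow> 'a) l x t. geodesic \<gamma> l \<longrightarrow> t \<in> {0..1} \<longrightarrow>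
        (dist (\<gamma> (t * l)) x)\<^sup>2 \<le> (1 - t) * (dist (\<gamma> 0) x)\<^sup>2 + t * (dist (\<gamma> l) x)\<^sup>2
          - t * (1 - t) * (dist (\<gamma> 0) (\<gamma> l))\<^sup>2)"

definition separable_space :: "'a::metric_space itself \<Rightarrow> bool" where
  "separable_space _ \<longleftrightarrow> (\<exists>D::'a set. countable D \<and> closure D = UNIV)"

text \<open>Functions with values in (-\<infinity>,+\<infinity>] are modelled as ereal-valued functions never equal to -\<infinity>.\<close>
definition proper_fun :: "('a \<Rightarrow> ereal) \<Rightarrow> bool" where
  "proper_fun g \<longleftrightarrow> (\<forall>x. g x \<noteq> -\<infinity>) \<and> (\<exists>x. g x \<noteq> \<infinity>)"

definition lsc_fun :: "('a::topological_space \<Rightarrow> ereal) \<Rightarrow> bool" where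
  "lsc_fun g \<longleftrightarrow> (\<forall>c. closed {x. g x \<le> c})"

definition geod_convex :: "('a::metric_space \<Rightarrow> ereal) \<Rightarrow> bool" where
  "geod_convex g \<longleftrightarrow> (\<forall>\<gamma> l t. geodesic \<gamma> l \<longrightarrow> t \<in> {0..1} \<longrightarrow>
      g (\<gamma> (t * l)) \<le> ereal (1 - t) * g (\<gamma> 0) + ereal t * g (\<gamma> l))"

definition normal_convex_integrand ::
    "'e measure \<Rightarrow> ('e \<Rightarrow> 'a::metric_space \<Rightarrow> ereal) \<Rightarrow> bool" where
  "normal_convex_integrand M f \<longleftrightarrow>
     (\<lambda>(e, x). f e x) \<in> borel_measurable (M \<Otimes>\<^sub>M borel) \<and>
     (\<forall>e\<in>space M. proper_fun (f e) \<and> lsc_fun (f e) \<and> geod_convex (f e))"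

definition ereal_integral :: "'e measure \<Rightarrow> ('e \<Rightarrow> ereal) \<Rightarrow> ereal" where
  "ereal_integral M g =
     (let p = enn2ereal (\<integral>\<^sup>+ e. e2ennreal (g e) \<partial>M);
          n = enn2ereal (\<integral>\<^sup>+ e. e2ennreal (- g e) \<partial>M)
      in if p = \<infinity> then \<infinity> else p - n)"

definition integral_fun :: "'e measure \<Rightarrow> ('e \<Rightarrow> 'a \<Rightarrow> ereal) \<Rightarrow> 'a \<Rightarrow> ereal" where
  "integral_fun M f x = ereal_integral M (\<lambda>e. f e x)"

definition argmin_set :: "('a \<Rightarrow> ereal) \<Rightarrow> 'a set" where
  "argmin_set g = {y. \<forall>w. g y \<le> g w}"

definition prox :: "('e \<Rightarrow> 'a::metric_space \<Rightarrow> ereal) \<Rightarrow> real \<Rightarrow> 'e \<Rightarrow> 'a \<Rightarrow> 'a set" where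
  "prox f lam e x = argmin_set (\<lambda>y. f e y + ereal ((dist x y)\<^sup>2 / (2 * lam)))"

end

theory Submission
  imports Defs
begin

(* The proximal point p of a geodesically convex g at x in a Hadamard space satisfies the
   variational inequality d(p,y)^2 <= 2 lam (Phi y - Phi p), where Phi is the proximal objective.
   Combined with the Lipschitz bound of the sampled function, one step with sample e gives
     d(x_{n+1},z)^2 <= d(x_n,z)^2 - 2 lam_n (f(e,x_n) - f(e,z)) + lam_n^2 L(e)^2.
   The iterate x_n depends only on the samples before e, which are independent of e, so in
   expectation the middle term becomes 2 lam_n E[F(x_n)]. Telescoping,
   2 sum_n lam_n E[F(x_n)] <= d(x_0,z)^2 + Lbar T, so E[F(x_n)] cannot stay >= eps along a
   window whose step sizes add up to (b + 4 Lbar T)/eps.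
   The iterates need not be measurable; they agree almost surely with the iterates of the
   proximal map restricted to a full-measure set of samples, and this map is jointly
   measurable because, by separability, its value is determined by the objective on a
   countable dense set. *)

section \<open>Proximal points in Hadamard spaces\<close>

definition geodesically_convex :: "('a::metric_space \<Rightarrow> real) \<Rightarrow> bool" where
  "geodesically_convex h \<longleftrightarrow> (\<forall>\<gamma> l t. geodesic \<gamma> l \<longrightarrow> t \<in> {0..1} \<longrightarrow>
      h (\<gamma> (t * l)) \<le> (1 - t) * h (\<gamma> 0) + t * h (\<gamma> l))"

lemma hadamard_space_geodesicE:
  fixes a b :: "'a::metric_space"
  assumes "hadamard_space TYPE('a)"
  obtains \<gamma> :: "real \<Rightarrow> 'a" where "geodesic \<gamma> (dist a b)" "\<gamma> 0 = a" "\<gamma> (dist a b) = b"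
  using assms unfolding hadamard_space_def geodesic_space_def by blast

lemma hadamard_space_complete:
  "hadamard_space TYPE('a::metric_space) \<Longrightarrow> Topological_Spaces.complete (UNIV :: 'a set)"
  unfolding hadamard_space_def by simp

lemma hadamard_space_CAT0:
  assumes "hadamard_space TYPE('a::metric_space)" "geodesic (\<gamma> :: real \<Rightarrow> 'a) l" "t \<in> {0..1}"
  shows "(dist (\<gamma> (t * l)) x)\<^sup>2 \<le> (1 - t) * (dist (\<gamma> 0) x)\<^sup>2 + t * (dist (\<gamma> l) x)\<^sup>2
          - t * (1 - t) * (dist (\<gamma> 0) (\<gamma> l))\<^sup>2"
  using assms unfolding hadamard_space_def by blast

definition prox_objective :: "('a::metric_space \<Rightarrow> real) \<Rightarrow> real \<Rightarrow> 'a \<Rightarrow> 'a \<Rightarrow> real" where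
  "prox_objective h lam x y = h y + (dist x y)\<^sup>2 / (2 * lam)"

definition is_prox_point :: "('a::metric_space \<Rightarrow> real) \<Rightarrow> real \<Rightarrow> 'a \<Rightarrow> 'a \<Rightarrow> bool" where
  "is_prox_point h lam x p \<longleftrightarrow> (\<forall>w. prox_objective h lam x p \<le> prox_objective h lam x w)"

lemma nonpos_if_le_small_multiples:
  fixes A B :: real
  assumes "B \<ge> 0" and le: "\<And>t. 0 < t \<Longrightarrow> t \<le> 1 \<Longrightarrow> A \<le> t * B"
  shows "A \<le> 0"
proof (rule ccontr)
  assume "\<not> A \<le> 0"
  define t where "t = min 1 (A / (2 * B + 1))"
  have t: "0 < t" "t \<le> 1" using \<open>\<not> A \<le> 0\<close> \<open>B \<ge> 0\<close> by (auto simp: t_def)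
  have "t * B \<le> A / (2 * B + 1) * B" using \<open>B \<ge> 0\<close> by (intro mult_right_mono) (auto simp: t_def)
  also have "\<dots> < A" using \<open>\<not> A \<le> 0\<close> \<open>B \<ge> 0\<close> by (simp add: field_simps add_pos_nonneg)
  finally show False using le[OF t] by simp
qed

text \<open>Compare the objective at \<open>p\<close> with its value at the point at parameter \<open>t\<close> of the
  geodesic from \<open>p\<close> to \<open>y\<close>; letting \<open>t \<rightarrow> 0\<close> yields the inequality.\<close>
lemma prox_point_variational_ineq:
  fixes h :: "'a::metric_space \<Rightarrow> real"
  assumes had: "hadamard_space TYPE('a)" and conv: "geodesically_convex h"
    and lam: "lam > 0" and p: "is_prox_point h lam x p"
  shows "(dist p y)\<^sup>2 \<le> 2 * lam * (prox_objective h lam x y - prox_objective h lam x p)"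
proof -
  obtain \<gamma> :: "real \<Rightarrow> 'a" where \<gamma>: "geodesic \<gamma> (dist p y)" "\<gamma> 0 = p" "\<gamma> (dist p y) = y"
    using hadamard_space_geodesicE[OF had] by blast
  define R where "R = 2 * lam * (prox_objective h lam x y - prox_objective h lam x p)"
  have "(dist p y)\<^sup>2 - R \<le> t * (dist p y)\<^sup>2" if t: "0 < t" "t \<le> 1" for t
  proof -
    let ?q = "\<gamma> (t * dist p y)"
    have cat0: "(dist ?q x)\<^sup>2 \<le> (1 - t) * (dist p x)\<^sup>2 + t * (dist y x)\<^sup>2 - t * (1 - t) * (dist p y)\<^sup>2"
      using hadamard_space_CAT0[OF had \<gamma>(1), of t x] t \<gamma> by simp
    have convex: "h ?q \<le> (1 - t) * h p + t * h y"
      using conv \<gamma> t unfolding geodesically_convex_def by force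
    have "2 * lam * prox_objective h lam x p \<le> 2 * lam * prox_objective h lam x ?q"
      using p lam unfolding is_prox_point_def by simp
    then have "2 * lam * h p + (dist x p)\<^sup>2 \<le> 2 * lam * h ?q + (dist x ?q)\<^sup>2"
      using lam by (simp add: prox_objective_def distrib_left)
    also have "\<dots> \<le> 2 * lam * ((1 - t) * h p + t * h y)
        + ((1 - t) * (dist p x)\<^sup>2 + t * (dist y x)\<^sup>2 - t * (1 - t) * (dist p y)\<^sup>2)"
      using cat0 convex lam by (simp add: dist_commute add_mono)
    finally have "t * (2 * lam * h p + (dist x p)\<^sup>2)
        \<le> t * (2 * lam * h y + (dist x y)\<^sup>2 - (1 - t) * (dist p y)\<^sup>2)"
      by (simp add: algebra_simps dist_commute)
    then have "2 * lam * h p + (dist x p)\<^sup>2 \<le> 2 * lam * h y + (dist x y)\<^sup>2 - (1 - t) * (dist p y)\<^sup>2"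
      using t by simp
    then show ?thesis using lam by (simp add: R_def prox_objective_def algebra_simps)
  qed
  then have "(dist p y)\<^sup>2 - R \<le> 0" by (intro nonpos_if_le_small_multiples[of "(dist p y)\<^sup>2"]) auto
  then show ?thesis by (simp add: R_def)
qed

lemma prox_point_unique:
  fixes h :: "'a::metric_space \<Rightarrow> real"
  assumes "hadamard_space TYPE('a)" "geodesically_convex h" "lam > 0"
    and p: "is_prox_point h lam x p" and q: "is_prox_point h lam x q"
  shows "p = q"
proof -
  have "(dist p q)\<^sup>2 \<le> 2 * lam * (prox_objective h lam x q - prox_objective h lam x p)"
    using prox_point_variational_ineq[OF assms(1-3) p] .
  moreover have "prox_objective h lam x q = prox_objective h lam x p"
    using p q unfolding is_prox_point_def by (meson order_antisym)
  ultimately show ?thesis by simp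
qed

lemma prox_objective_midpoint:
  fixes h :: "'a::metric_space \<Rightarrow> real"
  assumes had: "hadamard_space TYPE('a)" and conv: "geodesically_convex h"
    and lam: "lam > 0"
  obtains m where "prox_objective h lam x m \<le>
    (prox_objective h lam x a + prox_objective h lam x b) / 2 - (dist a b)\<^sup>2 / (8 * lam)"
proof -
  obtain \<gamma> :: "real \<Rightarrow> 'a" where \<gamma>: "geodesic \<gamma> (dist a b)" "\<gamma> 0 = a" "\<gamma> (dist a b) = b"
    using hadamard_space_geodesicE[OF had] by blast
  let ?m = "\<gamma> ((1/2) * dist a b)"
  have cat0: "(dist ?m x)\<^sup>2 \<le> (1/2) * (dist a x)\<^sup>2 + (1/2) * (dist b x)\<^sup>2 - (1/4) * (dist a b)\<^sup>2"
    using hadamard_space_CAT0[OF had \<gamma>(1), of "1/2" x] \<gamma> by simp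
  have convex: "h ?m \<le> (1/2) * h a + (1/2) * h b"
    using conv[unfolded geodesically_convex_def, rule_format, OF \<gamma>(1), of "1/2"] \<gamma> by simp
  have "prox_objective h lam x ?m \<le> (1/2) * h a + (1/2) * h b
      + ((1/2) * (dist a x)\<^sup>2 + (1/2) * (dist b x)\<^sup>2 - (1/4) * (dist a b)\<^sup>2) / (2 * lam)"
    unfolding prox_objective_def using cat0 convex lam
    by (intro add_mono divide_right_mono) (auto simp: dist_commute)
  also have "\<dots> = (prox_objective h lam x a + prox_objective h lam x b) / 2 - (dist a b)\<^sup>2 / (8 * lam)"
    using lam by (simp add: prox_objective_def field_simps dist_commute)
  finally show ?thesis using that by blast
qed

lemma prox_objective_minimizing_Cauchy:
  fixes h :: "'a::metric_space \<Rightarrow> real"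
  assumes had: "hadamard_space TYPE('a)" and conv: "geodesically_convex h"
    and lam: "lam > 0" and lower: "\<And>w. m \<le> prox_objective h lam x w"
    and ys: "\<And>k. prox_objective h lam x (ys k) \<le> m + 1 / Suc k"
  shows "Cauchy ys"
proof (rule metric_CauchyI)
  have bound: "(dist (ys j) (ys k))\<^sup>2 \<le> 8 * lam / Suc N" if "N \<le> j" "N \<le> k" for N j k
  proof -
    obtain c where c: "prox_objective h lam x c \<le> (prox_objective h lam x (ys j)
        + prox_objective h lam x (ys k)) / 2 - (dist (ys j) (ys k))\<^sup>2 / (8 * lam)"
      using prox_objective_midpoint[OF had conv lam] by blast
    have "1 / real (Suc j) \<le> 1 / Suc N" "1 / real (Suc k) \<le> 1 / Suc N"
      using that by (simp_all add: frac_le)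
    moreover have "(dist (ys j) (ys k))\<^sup>2 / (8 * lam) \<le> (1 / Suc j + 1 / Suc k) / 2"
      using c lower[of c] ys[of j] ys[of k] by argo
    ultimately have "(dist (ys j) (ys k))\<^sup>2 / (8 * lam) \<le> 1 / Suc N"
      by argo
    then show ?thesis using lam by (simp add: field_simps)
  qed
  fix e :: real assume e: "0 < e"
  obtain N :: nat where N: "8 * lam / e\<^sup>2 < N" using reals_Archimedean2 by blast
  have "8 * lam < e\<^sup>2 * N" using N e by (simp add: field_simps)
  also have "\<dots> \<le> e\<^sup>2 * Suc N" by (intro mult_left_mono) auto
  finally have "8 * lam / Suc N < e\<^sup>2" by (simp add: pos_divide_less_eq)
  have "dist (ys j) (ys k) < e" if "N \<le> j" "N \<le> k" for j k
  proof (rule power_less_imp_less_base)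
    show "(dist (ys j) (ys k))\<^sup>2 < e\<^sup>2" using bound[OF that] \<open>8 * lam / Suc N < e\<^sup>2\<close> by linarith
  qed (use e in simp)
  then show "\<exists>N. \<forall>j\<ge>N. \<forall>k\<ge>N. dist (ys j) (ys k) < e" by blast
qed

lemma lipschitz_on_UNIV_diff_le:
  fixes h :: "'a::metric_space \<Rightarrow> real"
  shows "K-lipschitz_on UNIV h \<Longrightarrow> h u - h v \<le> K * dist u v"
  unfolding lipschitz_on_def dist_real_def by (meson UNIV_I abs_le_D1)

lemma prox_objective_diff:
  "lam > 0 \<Longrightarrow> 2 * lam * (prox_objective h lam x y - prox_objective h lam x p)
    = (dist x y)\<^sup>2 - (dist x p)\<^sup>2 + 2 * lam * (h y - h p)"
  by (simp add: prox_objective_def field_simps)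

lemma prox_objective_lower_bound:
  fixes h :: "'a::metric_space \<Rightarrow> real"
  assumes lam: "lam > 0" and lip: "K-lipschitz_on UNIV h"
  shows "h x - K\<^sup>2 * lam / 2 \<le> prox_objective h lam x w"
proof -
  have "h x - h w \<le> K * dist x w" using lip by (rule lipschitz_on_UNIV_diff_le)
  moreover have "0 \<le> (dist x w - K * lam)\<^sup>2 / (2 * lam)" using lam by simp
  moreover have "(dist x w - K * lam)\<^sup>2 / (2 * lam)
      = (dist x w)\<^sup>2 / (2 * lam) - K * dist x w + K\<^sup>2 * lam / 2"
    using lam by (simp add: field_simps power2_eq_square)
  ultimately show ?thesis unfolding prox_objective_def by linarith
qed

lemma prox_point_exists:
  fixes h :: "'a::metric_space \<Rightarrow> real"
  assumes had: "hadamard_space TYPE('a)" and conv: "geodesically_convex h" and lam: "lam > 0"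
    and lip: "K-lipschitz_on UNIV h"
  obtains p where "is_prox_point h lam x p"
proof -
  let ?\<phi> = "prox_objective h lam x"
  have "bdd_below (range ?\<phi>)"
    using prox_objective_lower_bound[OF lam lip] by (intro bdd_belowI2)
  define m where "m = Inf (range ?\<phi>)"
  have lower: "m \<le> ?\<phi> w" for w unfolding m_def using \<open>bdd_below _\<close> by (intro cInf_lower) auto
  have "\<exists>y. ?\<phi> y < m + 1 / Suc k" for k
    using cInf_lessD[of "range ?\<phi>" "m + 1 / Suc k"] unfolding m_def by auto
  then obtain ys where ys: "\<And>k. ?\<phi> (ys k) < m + 1 / Suc k" by metis
  have "Cauchy ys"
    using ys by (intro prox_objective_minimizing_Cauchy[OF had conv lam lower]) (simp add: less_imp_le)
  then obtain p where p: "ys \<longlonglongrightarrow> p"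
    using hadamard_space_complete[OF had] by (metis UNIV_I completeE)
  have "continuous_on UNIV h" using lip by (rule lipschitz_on_continuous_on)
  then have "isCont ?\<phi> p"
    unfolding prox_objective_def using lam
    by (intro continuous_intros) (auto simp: continuous_on_eq_continuous_at)
  then have "(\<lambda>k. ?\<phi> (ys k)) \<longlonglongrightarrow> ?\<phi> p" using p by (rule isCont_tendsto_compose)
  moreover have "(\<lambda>k. ?\<phi> (ys k)) \<longlonglongrightarrow> m"
  proof (rule real_tendsto_sandwich[of "\<lambda>k. m" _ _ "\<lambda>k. m + 1 / Suc k"])
    show "(\<lambda>k. m + 1 / real (Suc k)) \<longlonglongrightarrow> m"
      using tendsto_add[OF tendsto_const[of m] LIMSEQ_Suc[OF lim_inverse_n']] by (simp add: divide_inverse)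
  qed (use lower ys in \<open>auto intro!: always_eventually less_imp_le\<close>)
  ultimately have "?\<phi> p = m" by (rule LIMSEQ_unique)
  then show ?thesis using that lower unfolding is_prox_point_def by metis
qed

definition prox_real :: "('a::metric_space \<Rightarrow> real) \<Rightarrow> real \<Rightarrow> 'a \<Rightarrow> 'a" where
  "prox_real h lam x = (THE p. is_prox_point h lam x p)"

lemma is_prox_point_prox_real:
  fixes h :: "'a::metric_space \<Rightarrow> real"
  assumes "hadamard_space TYPE('a)" "geodesically_convex h" "lam > 0" "K-lipschitz_on UNIV h"
  shows "is_prox_point h lam x (prox_real h lam x)"
proof -
  obtain p where "is_prox_point h lam x p" using prox_point_exists[OF assms] .
  then have "\<exists>!p. is_prox_point h lam x p" using prox_point_unique[OF assms(1-3)] by blast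
  then show ?thesis unfolding prox_real_def by (rule theI')
qed

lemma prox_real_eqI:
  fixes h :: "'a::metric_space \<Rightarrow> real"
  assumes "hadamard_space TYPE('a)" "geodesically_convex h" "lam > 0" "K-lipschitz_on UNIV h"
    and "is_prox_point h lam x p"
  shows "prox_real h lam x = p"
  using prox_point_unique[OF assms(1-3) is_prox_point_prox_real[OF assms(1-4)] assms(5)] .

text \<open>The Lipschitz bound absorbs the displacement term \<open>(dist x p)\<^sup>2\<close> of the variational
  inequality at the cost of \<open>lam\<^sup>2 * K\<^sup>2\<close>.\<close>
lemma prox_real_dist_le:
  fixes h :: "'a::metric_space \<Rightarrow> real"
  assumes had: "hadamard_space TYPE('a)" and conv: "geodesically_convex h" and lam: "lam > 0"
    and lip: "K-lipschitz_on UNIV h"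
  shows "(dist (prox_real h lam x) z)\<^sup>2 \<le> (dist x z)\<^sup>2 - 2 * lam * (h x - h z) + lam\<^sup>2 * K\<^sup>2"
proof -
  define p where "p = prox_real h lam x"
  define a where "a = dist x p"
  have "(dist p z)\<^sup>2 \<le> 2 * lam * (prox_objective h lam x z - prox_objective h lam x p)"
    unfolding p_def by (rule prox_point_variational_ineq[OF had conv lam is_prox_point_prox_real[OF assms]])
  then have var: "(dist p z)\<^sup>2 \<le> (dist x z)\<^sup>2 - a\<^sup>2 + 2 * lam * (h z - h p)"
    unfolding prox_objective_diff[OF lam] a_def .
  have "h x - h p \<le> K * a" unfolding a_def using lip by (rule lipschitz_on_UNIV_diff_le)
  then have "2 * lam * (h x - h p) \<le> 2 * lam * (K * a)" using lam by simp
  moreover have "0 \<le> (a - lam * K)\<^sup>2" by simp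
  moreover have "(a - lam * K)\<^sup>2 = a\<^sup>2 - 2 * lam * (K * a) + lam\<^sup>2 * K\<^sup>2"
    by (simp add: power2_eq_square algebra_simps)
  moreover have "(dist p z)\<^sup>2 \<le> (dist x z)\<^sup>2 - a\<^sup>2 + 2 * lam * (h x - h p) - 2 * lam * (h x - h z)"
    using var by (simp add: algebra_simps)
  ultimately show ?thesis unfolding p_def by linarith
qed

section \<open>Measurability of the proximal map\<close>

lemma separable_space_dense_sequenceE:
  assumes "separable_space TYPE('a::metric_space)"
  obtains d :: "nat \<Rightarrow> 'a::metric_space" where "closure (range d) = UNIV"
proof -
  obtain D :: "'a set" where D: "countable D" "closure D = UNIV"
    using assms unfolding separable_space_def by blast
  then have "D \<noteq> {}" by auto
  with D show ?thesis using that[of "from_nat_into D"] by (simp add: range_from_nat_into)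
qed

lemma dense_sequence_approx:
  fixes \<phi> :: "'a::metric_space \<Rightarrow> real"
  assumes dense: "closure (range d) = UNIV" and cont: "isCont \<phi> p" and c: "c > 0"
  obtains i where "\<phi> (d i) < \<phi> p + c" "dist (d i) p < c"
proof -
  obtain \<delta> where \<delta>: "\<delta> > 0" "\<And>y. dist y p < \<delta> \<Longrightarrow> dist (\<phi> y) (\<phi> p) < c"
    using cont c unfolding continuous_at_eps_delta by blast
  have "p \<in> closure (range d)" using dense by simp
  then obtain i where i: "dist (d i) p < min \<delta> c"
    using \<delta>(1) c unfolding closure_approachable by (metis min_less_iff_conj rangeE)
  then have "\<phi> (d i) < \<phi> p + c" using \<delta>(2)[of "d i"] by (simp add: dist_real_def)
  with i show ?thesis using that by simp
qed

lemma dist_minimizer_le_of_approx_min: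
  fixes \<phi> :: "'a::metric_space \<Rightarrow> real"
  assumes dense: "closure (range d) = UNIV" and cont: "continuous_on UNIV \<phi>"
    and growth: "\<And>y. (dist p y)\<^sup>2 \<le> c * (\<phi> y - \<phi> p)" and c: "c > 0"
    and approx: "\<And>j. \<phi> (d i) \<le> \<phi> (d j) + \<delta>"
  shows "(dist p (d i))\<^sup>2 \<le> c * \<delta>"
proof -
  have "\<phi> (d i) \<le> \<phi> p + \<delta>"
  proof (rule field_le_epsilon)
    fix r :: real assume "r > 0"
    moreover have "isCont \<phi> p" using cont by (simp add: continuous_on_eq_continuous_at)
    ultimately obtain j where "\<phi> (d j) < \<phi> p + r" using dense_sequence_approx[OF dense] by blast
    then show "\<phi> (d i) \<le> \<phi> p + \<delta> + r" using approx[of j] by linarith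
  qed
  then have "c * (\<phi> (d i) - \<phi> p) \<le> c * \<delta>" using c by (intro mult_left_mono) auto
  then show ?thesis using growth[of "d i"] by linarith
qed

text \<open>The right-hand side involves only countably many values of \<open>\<phi>\<close>; this is what makes the
  proximal map measurable.\<close>
lemma minimizer_in_closed_iff:
  fixes \<phi> :: "'a::metric_space \<Rightarrow> real"
  assumes dense: "closure (range d) = UNIV" and cont: "continuous_on UNIV \<phi>"
    and growth: "\<And>y. (dist p y)\<^sup>2 \<le> c * (\<phi> y - \<phi> p)" and c: "c > 0"
    and C: "closed C" "C \<noteq> {}"
  shows "p \<in> C \<longleftrightarrow>
    (\<forall>k::nat. \<exists>i. infdist (d i) C < 1 / Suc k \<and> (\<forall>j. \<phi> (d i) \<le> \<phi> (d j) + 1 / Suc k))"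
    (is "_ \<longleftrightarrow> (\<forall>k. ?approx k)")
proof
  have min: "\<phi> p \<le> \<phi> y" for y
  proof -
    have "0 \<le> c * (\<phi> y - \<phi> p)" using growth[of y] zero_le_power2 order_trans by blast
    then show ?thesis using c by (simp add: zero_le_mult_iff)
  qed
  have isCont: "isCont \<phi> y" for y using cont by (simp add: continuous_on_eq_continuous_at)
  {
    assume "p \<in> C"
    show "\<forall>k. ?approx k"
    proof
      fix k :: nat
      obtain i where i: "\<phi> (d i) < \<phi> p + 1 / Suc k" "dist (d i) p < 1 / Suc k"
        using dense_sequence_approx[OF dense isCont, of "1 / Suc k"] by auto
      have "infdist (d i) C < 1 / Suc k" using infdist_le[OF \<open>p \<in> C\<close>, of "d i"] i(2) by linarith
      moreover have "\<phi> (d i) \<le> \<phi> (d j) + 1 / Suc k" for j using i(1) min[of "d j"] by linarith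
      ultimately show "?approx k" by blast
    qed
  next
    assume approx: "\<forall>k. ?approx k"
    have "infdist p C \<le> \<eta>" if \<eta>: "\<eta> > 0" for \<eta>
    proof -
      have "0 < min (\<eta> / 2) (\<eta>\<^sup>2 / (4 * c))" using \<eta> c by simp
      then obtain k :: nat where "inverse (Suc k) < min (\<eta> / 2) (\<eta>\<^sup>2 / (4 * c))"
        using reals_Archimedean by blast
      then have k: "1 / Suc k < \<eta> / 2" "1 / Suc k < \<eta>\<^sup>2 / (4 * c)" by (simp_all add: inverse_eq_divide)
      obtain i where i: "infdist (d i) C < 1 / Suc k" "\<And>j. \<phi> (d i) \<le> \<phi> (d j) + 1 / Suc k"
        using approx by blast
      have "(dist p (d i))\<^sup>2 \<le> c * (1 / Suc k)"
        using dist_minimizer_le_of_approx_min[OF dense cont growth c i(2)] .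
      also have "\<dots> < (\<eta> / 2)\<^sup>2" using k(2) c by (simp add: field_simps power2_eq_square)
      finally have "dist p (d i) < \<eta> / 2" by (rule power_less_imp_less_base) (use \<eta> in simp)
      moreover have "infdist p C \<le> infdist (d i) C + dist p (d i)" by (rule infdist_triangle)
      ultimately show ?thesis using i(1) k(1) by linarith
    qed
    then have "infdist p C = 0" using field_le_epsilon[of "infdist p C" 0] infdist_nonneg[of p C] by simp
    then show "p \<in> C" using in_closed_iff_infdist_zero[OF C] by simp
  }
qed

lemma prox_real_in_closed_iff:
  fixes g :: "'a::metric_space \<Rightarrow> real"
  assumes had: "hadamard_space TYPE('a)" and conv: "geodesically_convex g" and lam: "lam > 0"
    and lip: "K-lipschitz_on UNIV g" and dense: "closure (range d) = UNIV"
    and C: "closed C" "C \<noteq> {}"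
  shows "prox_real g lam x \<in> C \<longleftrightarrow> (\<forall>k::nat. \<exists>i. infdist (d i) C < 1 / Suc k \<and>
    (\<forall>j. prox_objective g lam x (d i) \<le> prox_objective g lam x (d j) + 1 / Suc k))"
proof (rule minimizer_in_closed_iff[OF dense _ _ _ C])
  show "continuous_on UNIV (prox_objective g lam x)"
    unfolding prox_objective_def using lipschitz_on_continuous_on[OF lip] lam
    by (intro continuous_intros) auto
  show "(dist (prox_real g lam x) y)\<^sup>2 \<le> (2 * lam) * (prox_objective g lam x y
      - prox_objective g lam x (prox_real g lam x))" for y
    using prox_point_variational_ineq[OF had conv lam is_prox_point_prox_real[OF had conv lam lip]] .
qed (use lam in simp)

lemma prox_real_measurable:
  fixes h :: "'e \<Rightarrow> 'a::metric_space \<Rightarrow> real"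
  assumes had: "hadamard_space TYPE('a)" and sep: "separable_space TYPE('a)"
    and G: "G \<in> sets M" and meas: "(\<lambda>(e, y). h e y) \<in> borel_measurable (M \<Otimes>\<^sub>M borel)"
    and lam: "lam > 0" and conv: "\<And>e. e \<in> G \<Longrightarrow> geodesically_convex (h e)"
    and lip: "\<And>e. e \<in> G \<Longrightarrow> \<exists>K. K-lipschitz_on UNIV (h e)"
  shows "(\<lambda>(e, x). if e \<in> G then prox_real (h e) lam x else x) \<in> measurable (M \<Otimes>\<^sub>M borel) borel"
proof -
  obtain d :: "nat \<Rightarrow> 'a" where dense: "closure (range d) = UNIV"
    using separable_space_dense_sequenceE[OF sep] .
  define F where "F = (\<lambda>(e, x). if e \<in> G then prox_real (h e) lam x else x)"
  define Q where "Q C w \<longleftrightarrow> (\<forall>k::nat. \<exists>i. infdist (d i) C < 1 / Suc k \<and>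
    (\<forall>j. prox_objective (h (fst w)) lam (snd w) (d i)
       \<le> prox_objective (h (fst w)) lam (snd w) (d j) + 1 / Suc k))" for C w
  have Q: "F w \<in> C \<longleftrightarrow> Q C w" if w: "fst w \<in> G" and C: "closed C" "C \<noteq> {}" for w C
  proof -
    obtain K where "K-lipschitz_on UNIV (h (fst w))" using lip[OF w] by blast
    from prox_real_in_closed_iff[OF had conv[OF w] lam this dense C] show ?thesis
      using w unfolding Q_def F_def by (simp add: split_beta)
  qed
  have [measurable]: "(\<lambda>w. h (fst w) y) \<in> borel_measurable (M \<Otimes>\<^sub>M borel)" for y
    using measurable_Pair_compose_split[OF meas measurable_fst measurable_const] by simp
  have [measurable]: "(\<lambda>x. dist x y) \<in> borel_measurable borel" for y :: 'a
    by (intro borel_measurable_continuous_onI continuous_intros)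
  have [measurable]: "(\<lambda>w. prox_objective (h (fst w)) lam (snd w) y) \<in> borel_measurable (M \<Otimes>\<^sub>M borel)" for y
    unfolding prox_objective_def by measurable
  have [measurable]: "Measurable.pred (M \<Otimes>\<^sub>M borel) (\<lambda>w. fst w \<in> G)" using G by measurable
  have "F \<in> measurable (M \<Otimes>\<^sub>M borel) (sigma UNIV (Collect closed))"
  proof (rule measurable_measure_of)
    fix C :: "'a set" assume "C \<in> Collect closed"
    then have [measurable]: "C \<in> sets borel" and "closed C" by auto
    show "F -` C \<inter> space (M \<Otimes>\<^sub>M borel) \<in> sets (M \<Otimes>\<^sub>M borel)"
    proof (cases "C = {}")
      case False
      have [measurable]: "Measurable.pred (M \<Otimes>\<^sub>M borel) (Q C)" unfolding Q_def by measurable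
      have "F -` C \<inter> space (M \<Otimes>\<^sub>M borel)
          = {w \<in> space (M \<Otimes>\<^sub>M borel). (fst w \<in> G \<and> Q C w) \<or> (fst w \<notin> G \<and> snd w \<in> C)}"
        using Q[OF _ \<open>closed C\<close> False] by (auto simp: F_def split: if_splits)
      also have "\<dots> \<in> sets (M \<Otimes>\<^sub>M borel)" by measurable
      finally show ?thesis .
    qed simp
  qed auto
  then show ?thesis unfolding F_def by (simp add: borel_eq_closed[symmetric])
qed

section \<open>Extended-real integrands\<close>

lemma ereal_integral_eq_integral:
  fixes h :: "'e \<Rightarrow> real"
  assumes h: "integrable M h" and g: "AE e in M. g e = ereal (h e)"
  shows "ereal_integral M g = ereal (\<integral>e. h e \<partial>M)"
proof -
  have pos: "(\<integral>\<^sup>+ e. e2ennreal (g e) \<partial>M) = ennreal (\<integral>e. max (h e) 0 \<partial>M)"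
  proof -
    have "(\<integral>\<^sup>+ e. e2ennreal (g e) \<partial>M) = (\<integral>\<^sup>+ e. ennreal (max (h e) 0) \<partial>M)"
      using g by (intro nn_integral_cong_AE) (auto simp: ennreal_max_0)
    also have "\<dots> = ennreal (\<integral>e. max (h e) 0 \<partial>M)"
      using h by (intro nn_integral_eq_integral) auto
    finally show ?thesis .
  qed
  have neg: "(\<integral>\<^sup>+ e. e2ennreal (- g e) \<partial>M) = ennreal (\<integral>e. max (- h e) 0 \<partial>M)"
  proof -
    have "(\<integral>\<^sup>+ e. e2ennreal (- g e) \<partial>M) = (\<integral>\<^sup>+ e. ennreal (max (- h e) 0) \<partial>M)"
      using g by (intro nn_integral_cong_AE) (auto simp: ennreal_max_0)
    also have "\<dots> = ennreal (\<integral>e. max (- h e) 0 \<partial>M)"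
      using h by (intro nn_integral_eq_integral integrable_max) auto
    finally show ?thesis .
  qed
  have "(\<integral>e. h e \<partial>M) = (\<integral>e. max (h e) 0 - max (- h e) 0 \<partial>M)"
    by (rule Bochner_Integration.integral_cong) (auto simp: max_def)
  also have "\<dots> = (\<integral>e. max (h e) 0 \<partial>M) - (\<integral>e. max (- h e) 0 \<partial>M)"
    using h by (intro Bochner_Integration.integral_diff integrable_max) auto
  finally show ?thesis unfolding ereal_integral_def Let_def pos neg by simp
qed

lemma integrable_real_of_ereal_if_ereal_integral_finite:
  fixes g :: "'e \<Rightarrow> ereal"
  assumes g: "g \<in> borel_measurable M"
    and finite: "ereal_integral M g \<noteq> \<infinity>" "ereal_integral M g \<noteq> -\<infinity>"
  shows "integrable M (\<lambda>e. real_of_ereal (g e))"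
proof -
  define p where "p = (\<integral>\<^sup>+ e. e2ennreal (g e) \<partial>M)"
  define n where "n = (\<integral>\<^sup>+ e. e2ennreal (- g e) \<partial>M)"
  have "enn2ereal p \<noteq> \<infinity>" using finite(1) unfolding ereal_integral_def Let_def p_def by auto
  then have p: "p \<noteq> \<top>" by simp
  have "enn2ereal p - enn2ereal n \<noteq> -\<infinity>"
    using finite(2) p unfolding ereal_integral_def Let_def p_def n_def by auto
  then have "enn2ereal n \<noteq> \<infinity>" using p by (cases "enn2ereal p") auto
  then have n: "n \<noteq> \<top>" by simp
  have "ennreal (norm (real_of_ereal (g e))) \<le> e2ennreal (g e) + e2ennreal (- g e)" for e
  proof (cases "g e")
    case (real r)
    then show ?thesis by (cases "r \<ge> 0") (auto simp: e2ennreal_neg)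
  qed auto
  then have "(\<integral>\<^sup>+ e. norm (real_of_ereal (g e)) \<partial>M) \<le> (\<integral>\<^sup>+ e. e2ennreal (g e) + e2ennreal (- g e) \<partial>M)"
    by (intro nn_integral_mono)
  also have "\<dots> = p + n" unfolding p_def n_def using g by (intro nn_integral_add) auto
  also have "\<dots> < \<infinity>" using p n by (simp add: less_top)
  finally show ?thesis using g by (intro integrableI_bounded) auto
qed

lemma proper_fun_lipschitz_finite:
  fixes g :: "'a::metric_space \<Rightarrow> ereal"
  assumes proper: "proper_fun g" and lip: "\<And>u v. g u \<le> g v + ereal (K * dist u v)"
  shows "g y = ereal (real_of_ereal (g y))"
proof -
  obtain y0 where "g y0 \<noteq> \<infinity>" using proper unfolding proper_fun_def by blast
  moreover have "g y \<le> g y0 + ereal (K * dist y y0)" by (rule lip)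
  moreover have "g y \<noteq> -\<infinity>" "g y0 \<noteq> -\<infinity>" using proper unfolding proper_fun_def by auto
  ultimately show ?thesis by (cases "g y"; cases "g y0") auto
qed

lemma lipschitz_on_real_of_ereal:
  fixes g :: "'a::metric_space \<Rightarrow> ereal"
  assumes finite: "\<And>y. g y = ereal (real_of_ereal (g y))"
    and lip: "\<And>u v. g u \<le> g v + ereal (K * dist u v)" and K: "K \<ge> 0"
  shows "K-lipschitz_on UNIV (\<lambda>y. real_of_ereal (g y))"
proof (rule lipschitz_onI)
  define r where "r y = real_of_ereal (g y)" for y
  have g: "g = (\<lambda>y. ereal (r y))" unfolding r_def by (rule ext) (rule finite)
  fix u v
  have "r u \<le> r v + K * dist u v" "r v \<le> r u + K * dist u v"
    using lip[of u v] lip[of v u] unfolding g by (simp_all add: dist_commute)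
  then show "dist (real_of_ereal (g u)) (real_of_ereal (g v)) \<le> K * dist u v"
    unfolding r_def by (simp add: dist_real_def abs_le_iff)
qed (rule K)

lemma geodesically_convex_real_of_ereal:
  fixes g :: "'a::metric_space \<Rightarrow> ereal"
  assumes convex: "geod_convex g" and finite: "\<And>y. g y = ereal (real_of_ereal (g y))"
  shows "geodesically_convex (\<lambda>y. real_of_ereal (g y))"
proof -
  define r where "r y = real_of_ereal (g y)" for y
  have g: "g = (\<lambda>y. ereal (r y))" unfolding r_def by (rule ext) (rule finite)
  have "geodesically_convex r"
    using convex unfolding g geod_convex_def geodesically_convex_def by simp
  then show ?thesis unfolding r_def .
qed

lemma normal_convex_integrand_lipschitz_realE:
  assumes f: "normal_convex_integrand M f"
    and lip: "AE e in M. \<forall>u v. f e u \<le> f e v + ereal (L e * dist u v)"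
    and L: "\<And>e. e \<in> space M \<Longrightarrow> L e \<ge> 0"
  obtains G where "G \<in> sets M" "AE e in M. e \<in> G"
    "\<And>e y. e \<in> G \<Longrightarrow> f e y = ereal (real_of_ereal (f e y))"
    "\<And>e. e \<in> G \<Longrightarrow> (L e)-lipschitz_on UNIV (\<lambda>y. real_of_ereal (f e y))"
    "\<And>e. e \<in> G \<Longrightarrow> geodesically_convex (\<lambda>y. real_of_ereal (f e y))"
proof -
  obtain N where N: "{e \<in> space M. \<not> (\<forall>u v. f e u \<le> f e v + ereal (L e * dist u v))} \<subseteq> N"
    "emeasure M N = 0" "N \<in> sets M"
    using AE_E[OF lip] by blast
  define G where "G = space M - N"
  have "G \<in> sets M" "AE e in M. e \<in> G"
    using N unfolding G_def by (auto intro: AE_I[of _ _ N])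
  moreover have finite: "f e y = ereal (real_of_ereal (f e y))" if "e \<in> G" for e y
    using that N(1) f unfolding G_def normal_convex_integrand_def
    by (intro proper_fun_lipschitz_finite) auto
  moreover have "(L e)-lipschitz_on UNIV (\<lambda>y. real_of_ereal (f e y))" if "e \<in> G" for e
    using that N(1) L finite unfolding G_def by (intro lipschitz_on_real_of_ereal) auto
  moreover have "geodesically_convex (\<lambda>y. real_of_ereal (f e y))" if "e \<in> G" for e
    using that f finite unfolding G_def normal_convex_integrand_def
    by (intro geodesically_convex_real_of_ereal) auto
  ultimately show ?thesis using that by blast
qed

section \<open>Descent with summable squared step sizes\<close>

lemma weighted_sum_le_of_descent:
  fixes D A lam :: "nat \<Rightarrow> real"
  assumes descent: "\<And>n. D (Suc n) \<le> D n - 2 * lam n * A n + (lam n)\<^sup>2 * C"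
  shows "2 * (\<Sum>n<m. lam n * A n) \<le> D 0 - D m + C * (\<Sum>n<m. (lam n)\<^sup>2)"
proof (induction m)
  case (Suc m)
  then show ?case using descent[of m] by (simp add: algebra_simps)
qed simp

text \<open>If every term of a window \<open>N..\<theta> N (B / \<epsilon>)\<close> whose step sizes sum up to at least \<open>B / \<epsilon>\<close>
  were \<open>\<ge> \<epsilon>\<close>, the weighted sum would exceed \<open>B\<close>; the factor \<open>4\<close> in \<open>B\<close> is slack.\<close>
lemma exists_small_in_window_of_descent:
  fixes D A lam :: "nat \<Rightarrow> real" and \<theta> :: "nat \<Rightarrow> real \<Rightarrow> nat"
  assumes lam: "\<And>n. lam n > 0" and A: "\<And>n. A n \<ge> 0" and D: "\<And>n. D n \<ge> 0" and C: "C \<ge> 0"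
    and descent: "\<And>n. D (Suc n) \<le> D n - 2 * lam n * A n + (lam n)\<^sup>2 * C"
    and b: "D 0 < b" and summable: "summable (\<lambda>n. (lam n)\<^sup>2)" and T: "(\<Sum>n. (lam n)\<^sup>2) < T"
    and \<theta>: "\<And>b' k. b' > 0 \<Longrightarrow> b' \<le> (\<Sum>n = k..\<theta> k b'. lam n)" and \<epsilon>: "\<epsilon> > 0"
  shows "\<exists>n. N \<le> n \<and> n \<le> \<theta> N ((b + 4 * C * T) / \<epsilon>) \<and> A n < \<epsilon>"
proof (rule ccontr)
  define B where "B = b + 4 * C * T"
  define m where "m = \<theta> N (B / \<epsilon>)"
  assume "\<not> ?thesis"
  then have large: "\<epsilon> \<le> A n" if "n \<in> {N..m}" for n
    using that unfolding m_def B_def by force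
  have sum_le_T: "(\<Sum>n<Suc m. (lam n)\<^sup>2) \<le> T"
    using sum_le_suminf[OF summable, of "{..<Suc m}"] T by auto
  have "0 \<le> (\<Sum>n. (lam n)\<^sup>2)" by (rule suminf_nonneg[OF summable]) simp
  then have "0 \<le> T" using T by linarith
  with C have "0 \<le> C * T" by simp
  then have "B > 0" unfolding B_def using b D[of 0] by linarith
  then have "B / \<epsilon> \<le> (\<Sum>n = N..m. lam n)" unfolding m_def using \<epsilon> by (intro \<theta>) simp
  then have "B \<le> \<epsilon> * (\<Sum>n = N..m. lam n)" using \<epsilon> by (simp add: field_simps)
  also have "\<dots> = (\<Sum>n = N..m. lam n * \<epsilon>)" by (simp add: sum_distrib_left mult.commute)
  also have "\<dots> \<le> (\<Sum>n = N..m. lam n * A n)"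
    using large lam by (intro sum_mono mult_left_mono) (auto intro: less_imp_le)
  also have "\<dots> \<le> (\<Sum>n<Suc m. lam n * A n)"
    using A lam by (intro sum_mono2) (auto intro: less_imp_le mult_nonneg_nonneg)
  finally have "2 * B \<le> D 0 - D (Suc m) + C * (\<Sum>n<Suc m. (lam n)\<^sup>2)"
    using weighted_sum_le_of_descent[of D lam A C "Suc m", OF descent] by linarith
  moreover have "C * (\<Sum>n<Suc m. (lam n)\<^sup>2) \<le> C * T" using sum_le_T C by (intro mult_left_mono)
  ultimately show False using b D[of 0] D[of "Suc m"] \<open>0 \<le> C * T\<close> unfolding B_def by simp
qed

lemma (in prob_space) integral_indep_var_pair:
  fixes g :: "'b \<times> 'b \<Rightarrow> real"
  assumes indep: "indep_var S X T Y" and g: "g \<in> borel_measurable (S \<Otimes>\<^sub>M T)"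
    and int: "integrable M (\<lambda>\<omega>. g (X \<omega>, Y \<omega>))"
  shows "(\<integral>\<omega>. g (X \<omega>, Y \<omega>) \<partial>M) = (\<integral>\<omega>. (\<integral>t. g (X \<omega>, t) \<partial>distr M T Y) \<partial>M)"
proof -
  have X: "X \<in> measurable M S" and Y: "Y \<in> measurable M T"
    using indep by (auto dest: indep_var_rv1 indep_var_rv2)
  have XY: "(\<lambda>\<omega>. (X \<omega>, Y \<omega>)) \<in> measurable M (S \<Otimes>\<^sub>M T)" using X Y by measurable
  interpret Q1: prob_space "distr M S X" using X by (rule prob_space_distr)
  interpret Q2: prob_space "distr M T Y" using Y by (rule prob_space_distr)
  interpret Q: pair_sigma_finite "distr M S X" "distr M T Y" ..
  have prod: "distr M (S \<Otimes>\<^sub>M T) (\<lambda>\<omega>. (X \<omega>, Y \<omega>)) = distr M S X \<Otimes>\<^sub>M distr M T Y"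
    using indep unfolding indep_var_distribution_eq by simp
  have sets_Q: "sets (distr M S X \<Otimes>\<^sub>M distr M T Y) = sets (S \<Otimes>\<^sub>M T)"
    by (rule sets_pair_measure_cong) simp_all
  have g': "g \<in> borel_measurable (distr M S X \<Otimes>\<^sub>M distr M T Y)"
    using g by (simp only: measurable_cong_sets[OF sets_Q refl])
  have "(\<integral>\<omega>. g (X \<omega>, Y \<omega>) \<partial>M) = (\<integral>w. g w \<partial>(distr M S X \<Otimes>\<^sub>M distr M T Y))"
    using integral_distr[OF XY g] unfolding prod by simp
  also have "\<dots> = (\<integral>s. (\<integral>t. g (s, t) \<partial>distr M T Y) \<partial>distr M S X)"
    using integrable_distr_eq[OF XY g] int unfolding prod by (intro Q.integral_fst'[symmetric]) simp
  also have "\<dots> = (\<integral>\<omega>. (\<integral>t. g (X \<omega>, t) \<partial>distr M T Y) \<partial>M)"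
  proof (rule integral_distr[OF X])
    show "(\<lambda>s. \<integral>t. g (s, t) \<partial>distr M T Y) \<in> borel_measurable S"
    proof (rule Q2.borel_measurable_lebesgue_integral)
      have sets_ST: "sets (S \<Otimes>\<^sub>M distr M T Y) = sets (S \<Otimes>\<^sub>M T)"
        by (rule sets_pair_measure_cong) simp_all
      show "(\<lambda>(s, t). g (s, t)) \<in> borel_measurable (S \<Otimes>\<^sub>M distr M T Y)"
        using g by (simp only: measurable_cong_sets[OF sets_ST refl] case_prod_eta)
    qed
  qed
  finally show ?thesis .
qed

section \<open>The stochastic proximal point iteration\<close>

text \<open>\<open>h\<close> is the real-valued integrand on the full-measure set \<open>G\<close>, and \<open>\<xi> n\<close> is the sample
  used in step \<open>n\<close> (the \<open>\<xi>\<^sub>n\<^sub>+\<^sub>1\<close> of the informal statement).\<close>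
locale stochastic_proximal_point =
  M: prob_space M + P: prob_space P
  for M :: "'e measure" and P :: "'w measure" +
  fixes h :: "'e \<Rightarrow> 'a::metric_space \<Rightarrow> real" and G :: "'e set" and L :: "'e \<Rightarrow> real"
    and lam :: "nat \<Rightarrow> real" and \<xi> :: "nat \<Rightarrow> 'w \<Rightarrow> 'e" and z x0 :: 'a
  assumes hadamard: "hadamard_space TYPE('a)" and separable: "separable_space TYPE('a)"
    and G_sets: "G \<in> sets M" and AE_G: "AE e in M. e \<in> G"
    and h_measurable: "(\<lambda>(e, y). h e y) \<in> borel_measurable (M \<Otimes>\<^sub>M borel)"
    and convex: "\<And>e. e \<in> G \<Longrightarrow> geodesically_convex (h e)"
    and lipschitz: "\<And>e. e \<in> G \<Longrightarrow> (L e)-lipschitz_on UNIV (h e)"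
    and L_measurable: "L \<in> borel_measurable M"
    and L_square_integrable: "integrable M (\<lambda>e. (L e)\<^sup>2)"
    and integrable_at_z: "integrable M (\<lambda>e. h e z)"
    and lam_pos: "\<And>n. lam n > 0"
    and \<xi>_measurable: "\<And>n. \<xi> n \<in> measurable P M"
    and \<xi>_indep: "P.indep_vars (\<lambda>_. M) \<xi> UNIV"
    and \<xi>_distr: "\<And>n. distr P M (\<xi> n) = M"
begin

lemma abs_h_diff_le: "e \<in> G \<Longrightarrow> \<bar>h e u - h e v\<bar> \<le> L e * dist u v"
  using lipschitz unfolding lipschitz_on_def dist_real_def by blast

lemma L_nonneg: "e \<in> G \<Longrightarrow> L e \<ge> 0"
  using lipschitz unfolding lipschitz_on_def by blast

lemma borel_measurable_h: "(\<lambda>e. h e y) \<in> borel_measurable M"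
  using measurable_Pair_compose_split[OF h_measurable measurable_ident_sets[OF refl] measurable_const] by simp

lemma integrable_L: "integrable M L"
  by (rule M.square_integrable_imp_integrable[OF L_measurable L_square_integrable])

lemma integrable_h: "integrable M (\<lambda>e. h e y)"
proof (rule Bochner_Integration.integrable_bound[of _ "\<lambda>e. \<bar>h e z\<bar> + L e * dist y z"])
  show "integrable M (\<lambda>e. \<bar>h e z\<bar> + L e * dist y z)" using integrable_at_z integrable_L by simp
  show "AE e in M. norm (h e y) \<le> norm (\<bar>h e z\<bar> + L e * dist y z)"
    using AE_G
  proof eventually_elim
    case (elim e)
    have "\<bar>h e y\<bar> \<le> \<bar>h e z\<bar> + \<bar>h e y - h e z\<bar>" by simp
    also have "\<dots> \<le> \<bar>h e z\<bar> + L e * dist y z" using abs_h_diff_le[OF elim] by simp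
    finally show ?case using L_nonneg[OF elim] by simp
  qed
qed (rule borel_measurable_h)

definition excess :: "'a \<Rightarrow> real" where
  "excess y = (\<integral>e. h e y - h e z \<partial>M)"

lemma excess_eq: "excess y = (\<integral>e. h e y \<partial>M) - (\<integral>e. h e z \<partial>M)"
  unfolding excess_def using integrable_h by simp

lemma abs_excess_le: "\<bar>excess y\<bar> \<le> (\<integral>e. L e \<partial>M) * dist y z"
proof -
  have "\<bar>excess y\<bar> \<le> (\<integral>e. \<bar>h e y - h e z\<bar> \<partial>M)"
    unfolding excess_def by (rule integral_abs_bound)
  also have "\<dots> \<le> (\<integral>e. L e * dist y z \<partial>M)"
    using integrable_h integrable_L AE_G
    by (intro integral_mono_AE) (auto elim!: eventually_mono intro: abs_h_diff_le)
  finally show ?thesis by simp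
qed

lemma borel_measurable_excess: "excess \<in> borel_measurable borel"
proof -
  have "(\<lambda>w. h (snd w) (fst w) - h (snd w) z) \<in> borel_measurable (borel \<Otimes>\<^sub>M M)"
    using measurable_Pair_compose_split[OF h_measurable measurable_snd measurable_fst]
      measurable_compose[OF measurable_snd borel_measurable_h]
    by (rule borel_measurable_diff)
  then have "(\<lambda>(y, e). h e y - h e z) \<in> borel_measurable (borel \<Otimes>\<^sub>M M)"
    by (simp add: case_prod_beta')
  from M.borel_measurable_lebesgue_integral[OF this] show ?thesis unfolding excess_def by simp
qed

definition prox_step :: "nat \<Rightarrow> 'e \<times> 'a \<Rightarrow> 'a" where
  "prox_step n = (\<lambda>(e, x). if e \<in> G then prox_real (h e) (lam n) x else x)"

lemma measurable_prox_step: "prox_step n \<in> measurable (M \<Otimes>\<^sub>M borel) borel"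
  unfolding prox_step_def using lipschitz
  by (intro prox_real_measurable[OF hadamard separable G_sets h_measurable lam_pos convex]) auto

lemma prox_step_dist_le:
  "e \<in> G \<Longrightarrow> (dist (prox_step n (e, x)) z)\<^sup>2
    \<le> (dist x z)\<^sup>2 - 2 * lam n * (h e x - h e z) + (lam n)\<^sup>2 * (L e)\<^sup>2"
  unfolding prox_step_def using prox_real_dist_le[OF hadamard convex lam_pos lipschitz] by simp

primrec iterate :: "nat \<Rightarrow> (nat \<Rightarrow> 'e) \<Rightarrow> 'a" where
  "iterate 0 s = x0"
| "iterate (Suc n) s = prox_step n (s n, iterate n s)"

lemma measurable_iterate: "n \<le> m \<Longrightarrow> iterate n \<in> borel_measurable (PiM {..<m} (\<lambda>_. M))"
proof (induction n)
  case 0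
  have "iterate 0 = (\<lambda>_. x0)" by (simp add: fun_eq_iff)
  then show ?case by simp
next
  case (Suc n)
  then have "(\<lambda>s. (s n, iterate n s)) \<in> measurable (PiM {..<m} (\<lambda>_. M)) (M \<Otimes>\<^sub>M borel)"
    by (intro measurable_Pair measurable_component_singleton) auto
  from measurable_compose[OF this measurable_prox_step] show ?case by simp
qed

lemma iterate_cong: "(\<And>i. i < n \<Longrightarrow> s i = s' i) \<Longrightarrow> iterate n s = iterate n s'"
  by (induction n) auto

definition iterates :: "nat \<Rightarrow> 'w \<Rightarrow> 'a" where
  "iterates n \<omega> = iterate n (\<lambda>i. \<xi> i \<omega>)"

lemma iterates_0: "iterates 0 \<omega> = x0"
  by (simp add: iterates_def)

lemma iterates_Suc: "iterates (Suc n) \<omega> = prox_step n (\<xi> n \<omega>, iterates n \<omega>)"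
  by (simp add: iterates_def)

lemma measurable_past_samples: "(\<lambda>\<omega>. restrict (\<lambda>i. \<xi> i \<omega>) {..<n}) \<in> measurable P (PiM {..<n} (\<lambda>_. M))"
  using \<xi>_measurable by (intro measurable_restrict) auto

lemma iterates_eq_past: "iterates n \<omega> = iterate n (restrict (\<lambda>i. \<xi> i \<omega>) {..<n})"
  unfolding iterates_def by (rule iterate_cong) simp

lemma measurable_iterates: "iterates n \<in> borel_measurable P"
  unfolding iterates_eq_past[abs_def]
  using measurable_compose[OF measurable_past_samples measurable_iterate[OF le_refl]] .

lemma AE_samples_in_G: "AE \<omega> in P. \<forall>n. \<xi> n \<omega> \<in> G"
  unfolding AE_all_countable
proof
  fix n
  have "AE e in distr P M (\<xi> n). e \<in> G" unfolding \<xi>_distr by (rule AE_G)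
  then show "AE \<omega> in P. \<xi> n \<omega> \<in> G" by (rule AE_distrD[OF \<xi>_measurable])
qed

lemma AE_eq_iterates:
  assumes start: "\<And>\<omega>. \<omega> \<in> space P \<Longrightarrow> x 0 \<omega> = x0"
    and step: "\<And>n \<omega>. \<omega> \<in> space P \<Longrightarrow> \<xi> n \<omega> \<in> G \<Longrightarrow>
      is_prox_point (h (\<xi> n \<omega>)) (lam n) (x n \<omega>) (x (Suc n) \<omega>)"
  shows "AE \<omega> in P. \<forall>n. x n \<omega> = iterates n \<omega>"
  using AE_samples_in_G AE_space
proof eventually_elim
  case (elim \<omega>)
  show ?case
  proof
    fix n show "x n \<omega> = iterates n \<omega>"
    proof (induction n)
      case (Suc n)
      have "prox_real (h (\<xi> n \<omega>)) (lam n) (x n \<omega>) = x (Suc n) \<omega>"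
        using elim step[of \<omega> n] hadamard convex lam_pos lipschitz by (blast intro: prox_real_eqI)
      then show ?case using elim Suc by (simp add: iterates_Suc prox_step_def)
    qed (simp add: start elim iterates_0)
  qed
qed

definition sample_excess :: "nat \<Rightarrow> 'w \<Rightarrow> real" where
  "sample_excess n \<omega> = h (\<xi> n \<omega>) (iterates n \<omega>) - h (\<xi> n \<omega>) z"

lemma borel_measurable_sample_excess: "sample_excess n \<in> borel_measurable P"
proof -
  have "(\<lambda>\<omega>. h (\<xi> n \<omega>) (iterates n \<omega>)) \<in> borel_measurable P"
    using measurable_Pair_compose_split[OF h_measurable \<xi>_measurable measurable_iterates] .
  moreover have "(\<lambda>\<omega>. h (\<xi> n \<omega>) z) \<in> borel_measurable P"
    using measurable_compose[OF \<xi>_measurable borel_measurable_h] .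
  ultimately show ?thesis unfolding sample_excess_def by (rule borel_measurable_diff)
qed

lemma borel_measurable_dist_iterates: "(\<lambda>\<omega>. (dist (iterates n \<omega>) z)\<^sup>2) \<in> borel_measurable P"
proof -
  have "(\<lambda>y. (dist y z)\<^sup>2) \<in> borel_measurable borel"
    by (intro borel_measurable_continuous_onI continuous_intros)
  from measurable_compose[OF measurable_iterates this] show ?thesis .
qed

lemma integrable_L_sample: "integrable P (\<lambda>\<omega>. (L (\<xi> n \<omega>))\<^sup>2)"
  using integrable_distr_eq[OF \<xi>_measurable, of "\<lambda>e. (L e)\<^sup>2"] L_measurable L_square_integrable
  unfolding \<xi>_distr by simp

lemma integral_L_sample: "(\<integral>\<omega>. (L (\<xi> n \<omega>))\<^sup>2 \<partial>P) = (\<integral>e. (L e)\<^sup>2 \<partial>M)"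
  using integral_distr[OF \<xi>_measurable, of "\<lambda>e. (L e)\<^sup>2"] L_measurable unfolding \<xi>_distr by simp

lemma AE_dist_iterates_le:
  "AE \<omega> in P. (dist (iterates (Suc n) \<omega>) z)\<^sup>2
     \<le> (dist (iterates n \<omega>) z)\<^sup>2 - 2 * lam n * sample_excess n \<omega> + (lam n)\<^sup>2 * (L (\<xi> n \<omega>))\<^sup>2"
  using AE_samples_in_G by eventually_elim (simp add: iterates_Suc sample_excess_def prox_step_dist_le)

lemma AE_abs_sample_excess_le:
  "AE \<omega> in P. \<bar>sample_excess n \<omega>\<bar> \<le> ((L (\<xi> n \<omega>))\<^sup>2 + (dist (iterates n \<omega>) z)\<^sup>2) / 2"
  using AE_samples_in_G
proof eventually_elim
  case (elim \<omega>)
  let ?l = "L (\<xi> n \<omega>)" and ?d = "dist (iterates n \<omega>) z"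
  have "\<bar>sample_excess n \<omega>\<bar> \<le> ?l * ?d"
    unfolding sample_excess_def using abs_h_diff_le elim by blast
  moreover have "2 * (?l * ?d) \<le> ?l\<^sup>2 + ?d\<^sup>2"
    using sum_squares_bound[of ?l ?d] by (simp add: power2_eq_square)
  ultimately show ?case by simp
qed

lemma integrable_dist_iterates: "integrable P (\<lambda>\<omega>. (dist (iterates n \<omega>) z)\<^sup>2)"
proof (induction n)
  case 0
  then show ?case by (simp add: iterates_0)
next
  case (Suc n)
  let ?l = "\<lambda>\<omega>. (L (\<xi> n \<omega>))\<^sup>2" and ?d = "\<lambda>\<omega>. (dist (iterates n \<omega>) z)\<^sup>2"
  show ?case
  proof (rule Bochner_Integration.integrable_bound[of _ "\<lambda>\<omega>. ?d \<omega> + lam n * (?l \<omega> + ?d \<omega>) + (lam n)\<^sup>2 * ?l \<omega>"])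
    show "integrable P (\<lambda>\<omega>. ?d \<omega> + lam n * (?l \<omega> + ?d \<omega>) + (lam n)\<^sup>2 * ?l \<omega>)"
      using Suc integrable_L_sample by simp
    show "AE \<omega> in P. norm ((dist (iterates (Suc n) \<omega>) z)\<^sup>2)
        \<le> norm (?d \<omega> + lam n * (?l \<omega> + ?d \<omega>) + (lam n)\<^sup>2 * ?l \<omega>)"
      using AE_dist_iterates_le[of n] AE_abs_sample_excess_le[of n]
    proof eventually_elim
      case (elim \<omega>)
      have "- sample_excess n \<omega> \<le> (?l \<omega> + ?d \<omega>) / 2" using elim(2) by linarith
      then have "- 2 * lam n * sample_excess n \<omega> \<le> lam n * (?l \<omega> + ?d \<omega>)"
        using lam_pos[of n] mult_left_mono[of _ _ "2 * lam n"] by fastforce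
      moreover have "0 \<le> lam n * (?l \<omega> + ?d \<omega>)" using lam_pos[of n] by simp
      ultimately show ?case using elim(1) by simp
    qed
  qed (rule borel_measurable_dist_iterates)
qed

lemma integrable_sample_excess: "integrable P (sample_excess n)"
proof (rule Bochner_Integration.integrable_bound)
  show "integrable P (\<lambda>\<omega>. ((L (\<xi> n \<omega>))\<^sup>2 + (dist (iterates n \<omega>) z)\<^sup>2) / 2)"
    using integrable_L_sample integrable_dist_iterates by simp
  show "AE \<omega> in P. norm (sample_excess n \<omega>) \<le> norm (((L (\<xi> n \<omega>))\<^sup>2 + (dist (iterates n \<omega>) z)\<^sup>2) / 2)"
    using AE_abs_sample_excess_le[of n] by eventually_elim simp
qed (rule borel_measurable_sample_excess)

lemma integrable_excess_iterates: "integrable P (\<lambda>\<omega>. excess (iterates n \<omega>))"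
proof (rule Bochner_Integration.integrable_bound)
  let ?c = "\<integral>e. L e \<partial>M"
  show "integrable P (\<lambda>\<omega>. ?c * (1 + (dist (iterates n \<omega>) z)\<^sup>2))"
    using integrable_dist_iterates by simp
  have "0 \<le> ?c" using AE_G by (intro integral_nonneg_AE) (auto elim!: eventually_mono intro: L_nonneg)
  moreover have "dist y z \<le> 1 + (dist y z)\<^sup>2" for y
  proof -
    have "2 * dist y z \<le> 1 + (dist y z)\<^sup>2"
      using sum_squares_bound[of 1 "dist y z"] by (simp add: power2_eq_square)
    then show ?thesis using zero_le_dist[of y z] by linarith
  qed
  ultimately have "?c * dist y z \<le> ?c * (1 + (dist y z)\<^sup>2)" for y by (intro mult_left_mono)
  then show "AE \<omega> in P. norm (excess (iterates n \<omega>)) \<le> norm (?c * (1 + (dist (iterates n \<omega>) z)\<^sup>2))"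
    using abs_excess_le \<open>0 \<le> ?c\<close> by (auto intro: order_trans)
qed (rule measurable_compose[OF measurable_iterates borel_measurable_excess])

text \<open>The iterate \<open>iterates n\<close> only depends on the samples before time \<open>n\<close>, which are independent
  of the fresh sample \<open>\<xi> n\<close>; averaging over \<open>\<xi> n\<close> first turns the sample excess into the excess.\<close>
lemma integral_sample_excess: "(\<integral>\<omega>. sample_excess n \<omega> \<partial>P) = (\<integral>\<omega>. excess (iterates n \<omega>) \<partial>P)"
proof -
  define past where "past \<omega> = restrict (\<lambda>i. \<xi> i \<omega>) {..<n}" for \<omega>
  define now where "now \<omega> = restrict (\<lambda>i. \<xi> i \<omega>) {n}" for \<omega>
  define g where "g w = h (snd w n) (iterate n (fst w)) - h (snd w n) z" for w :: "(nat \<Rightarrow> 'e) \<times> (nat \<Rightarrow> 'e)"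
  have indep: "P.indep_var (PiM {..<n} (\<lambda>_. M)) past (PiM {n} (\<lambda>_. M)) now"
    unfolding past_def now_def by (rule P.indep_var_restrict[OF \<xi>_indep]) auto
  have now: "now \<in> measurable P (PiM {n} (\<lambda>_. M))"
    unfolding now_def using \<xi>_measurable by (intro measurable_restrict) auto
  have component: "(\<lambda>t. t n) \<in> measurable (PiM {n} (\<lambda>_. M)) M"
    by (rule measurable_component_singleton) simp
  have h_now: "(\<lambda>t. h (t n) y) \<in> borel_measurable (PiM {n} (\<lambda>_. M))" for y
    using measurable_compose[OF component borel_measurable_h] .
  have g: "g \<in> borel_measurable (PiM {..<n} (\<lambda>_. M) \<Otimes>\<^sub>M PiM {n} (\<lambda>_. M))"
  proof -
    have "(\<lambda>w. (snd w n, iterate n (fst w))) \<in> measurable (PiM {..<n} (\<lambda>_. M) \<Otimes>\<^sub>M PiM {n} (\<lambda>_. M)) (M \<Otimes>\<^sub>M borel)"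
      by (intro measurable_Pair measurable_compose[OF measurable_snd component]
          measurable_compose[OF measurable_fst measurable_iterate[OF le_refl]])
    then show ?thesis unfolding g_def
      by (intro borel_measurable_diff measurable_Pair_compose_split[OF h_measurable]
          measurable_compose[OF _ borel_measurable_h]) (auto intro: measurable_compose[OF measurable_snd component])
  qed
  have sample: "sample_excess n = (\<lambda>\<omega>. g (past \<omega>, now \<omega>))"
    by (simp add: fun_eq_iff sample_excess_def g_def past_def now_def iterates_eq_past)
  have inner: "(\<integral>t. g (past \<omega>, t) \<partial>distr P (PiM {n} (\<lambda>_. M)) now) = excess (iterates n \<omega>)" for \<omega>
  proof -
    have "(\<integral>t. g (past \<omega>, t) \<partial>distr P (PiM {n} (\<lambda>_. M)) now) = (\<integral>\<omega>'. g (past \<omega>, now \<omega>') \<partial>P)"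
      unfolding g_def using h_now by (intro integral_distr[OF now] borel_measurable_diff) simp_all
    also have "\<dots> = (\<integral>\<omega>'. h (\<xi> n \<omega>') (iterates n \<omega>) - h (\<xi> n \<omega>') z \<partial>P)"
      by (simp add: g_def past_def now_def iterates_eq_past)
    also have "\<dots> = (\<integral>e. h e (iterates n \<omega>) - h e z \<partial>distr P M (\<xi> n))"
      using borel_measurable_h by (intro integral_distr[OF \<xi>_measurable, symmetric]) auto
    finally show ?thesis unfolding \<xi>_distr excess_def .
  qed
  show ?thesis
    using P.integral_indep_var_pair[OF indep g] integrable_sample_excess[of n] by (simp add: sample inner)
qed

lemma expected_dist_descent:
  "(\<integral>\<omega>. (dist (iterates (Suc n) \<omega>) z)\<^sup>2 \<partial>P) \<le> (\<integral>\<omega>. (dist (iterates n \<omega>) z)\<^sup>2 \<partial>P)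
     - 2 * lam n * (\<integral>\<omega>. excess (iterates n \<omega>) \<partial>P) + (lam n)\<^sup>2 * (\<integral>e. (L e)\<^sup>2 \<partial>M)"
proof -
  have "(\<integral>\<omega>. (dist (iterates (Suc n) \<omega>) z)\<^sup>2 \<partial>P) \<le> (\<integral>\<omega>. (dist (iterates n \<omega>) z)\<^sup>2
      - 2 * lam n * sample_excess n \<omega> + (lam n)\<^sup>2 * (L (\<xi> n \<omega>))\<^sup>2 \<partial>P)"
    using integrable_dist_iterates integrable_sample_excess integrable_L_sample
    by (intro integral_mono_AE[OF _ _ AE_dist_iterates_le]) auto
  also have "\<dots> = (\<integral>\<omega>. (dist (iterates n \<omega>) z)\<^sup>2 \<partial>P) - 2 * lam n * (\<integral>\<omega>. sample_excess n \<omega> \<partial>P)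
      + (lam n)\<^sup>2 * (\<integral>\<omega>. (L (\<xi> n \<omega>))\<^sup>2 \<partial>P)"
    using integrable_dist_iterates integrable_sample_excess integrable_L_sample by simp
  finally show ?thesis unfolding integral_sample_excess integral_L_sample .
qed

theorem expected_excess_small_in_window:
  fixes \<theta> :: "nat \<Rightarrow> real \<Rightarrow> nat"
  assumes z_min: "\<And>y. (\<integral>e. h e z \<partial>M) \<le> (\<integral>e. h e y \<partial>M)"
    and b: "(dist x0 z)\<^sup>2 < b" and summable: "summable (\<lambda>n. (lam n)\<^sup>2)" and T: "(\<Sum>n. (lam n)\<^sup>2) < T"
    and \<theta>: "\<And>b' k. b' > 0 \<Longrightarrow> b' \<le> (\<Sum>n = k..\<theta> k b'. lam n)" and \<epsilon>: "\<epsilon> > 0"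
  shows "\<exists>n. N \<le> n \<and> n \<le> \<theta> N ((b + 4 * (\<integral>e. (L e)\<^sup>2 \<partial>M) * T) / \<epsilon>)
    \<and> (\<integral>\<omega>. excess (iterates n \<omega>) \<partial>P) < \<epsilon>"
proof (rule exists_small_in_window_of_descent[OF lam_pos _ _ _ expected_dist_descent _ summable T \<theta> \<epsilon>])
  show "0 \<le> (\<integral>\<omega>. excess (iterates n \<omega>) \<partial>P)" for n
    using z_min by (intro Bochner_Integration.integral_nonneg) (simp add: excess_eq)
qed (use b in \<open>simp_all add: iterates_0 P.prob_space\<close>)

end

lemma is_prox_point_if_mem_prox:
  assumes "\<And>y. f e y = ereal (h y)" and "p \<in> prox f lam e x"
  shows "is_prox_point h lam x p"
  using assms unfolding prox_def argmin_set_def is_prox_point_def prox_objective_def by simp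

lemma stochastic_proximal_point_of_integrand:
  fixes f :: "'e \<Rightarrow> 'a::metric_space \<Rightarrow> ereal"
  assumes M: "prob_space M" and P: "prob_space P"
    and had: "hadamard_space TYPE('a)" and sep: "separable_space TYPE('a)"
    and f: "normal_convex_integrand M f"
    and proper: "proper_fun (integral_fun M f)" and z: "z \<in> argmin_set (integral_fun M f)"
    and lam: "\<And>n. lam n > 0" and \<xi>: "\<And>n. \<xi> n \<in> measurable P M"
    and \<xi>_indep: "prob_space.indep_vars P (\<lambda>_. M) \<xi> UNIV" and \<xi>_distr: "\<And>n. distr P M (\<xi> n) = M"
    and L: "\<And>e. e \<in> space M \<Longrightarrow> L e \<ge> 0" "L \<in> borel_measurable M" "integrable M (\<lambda>e. (L e)\<^sup>2)"
    and lip: "AE e in M. \<forall>u v. f e u \<le> f e v + ereal (L e * dist u v)"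
  obtains G where "stochastic_proximal_point M P (\<lambda>e y. real_of_ereal (f e y)) G L lam \<xi> z"
    and "\<And>e y. e \<in> G \<Longrightarrow> f e y = ereal (real_of_ereal (f e y))"
    and "\<And>y. integral_fun M f y = ereal (\<integral>e. real_of_ereal (f e y) \<partial>M)"
proof -
  obtain G where G: "G \<in> sets M" "AE e in M. e \<in> G"
    and finite: "\<And>e y. e \<in> G \<Longrightarrow> f e y = ereal (real_of_ereal (f e y))"
    and "\<And>e. e \<in> G \<Longrightarrow> (L e)-lipschitz_on UNIV (\<lambda>y. real_of_ereal (f e y))"
    and "\<And>e. e \<in> G \<Longrightarrow> geodesically_convex (\<lambda>y. real_of_ereal (f e y))"
    using normal_convex_integrand_lipschitz_realE[OF f lip L(1)] by blast
  have f_meas: "(\<lambda>(e, y). f e y) \<in> borel_measurable (M \<Otimes>\<^sub>M borel)"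
    using f unfolding normal_convex_integrand_def by blast
  then have "(\<lambda>w. real_of_ereal ((\<lambda>(e, y). f e y) w)) \<in> borel_measurable (M \<Otimes>\<^sub>M borel)"
    by measurable
  then have "(\<lambda>(e, y). real_of_ereal (f e y)) \<in> borel_measurable (M \<Otimes>\<^sub>M borel)"
    by (simp add: case_prod_beta')
  moreover have "integrable M (\<lambda>e. real_of_ereal (f e z))"
  proof (rule integrable_real_of_ereal_if_ereal_integral_finite)
    show "(\<lambda>e. f e z) \<in> borel_measurable M"
      using measurable_Pair_compose_split[OF f_meas measurable_ident_sets[OF refl] measurable_const] by simp
    obtain y where "integral_fun M f y \<noteq> \<infinity>" using proper unfolding proper_fun_def by blast
    moreover have "integral_fun M f z \<le> integral_fun M f y" using z unfolding argmin_set_def by blast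
    ultimately show "ereal_integral M (\<lambda>e. f e z) \<noteq> \<infinity>" by (auto simp: integral_fun_def)
    show "ereal_integral M (\<lambda>e. f e z) \<noteq> -\<infinity>"
      using proper unfolding proper_fun_def integral_fun_def by blast
  qed
  ultimately have S: "stochastic_proximal_point M P (\<lambda>e y. real_of_ereal (f e y)) G L lam \<xi> z"
    using M P had sep G lam \<xi> \<xi>_indep \<xi>_distr L
      \<open>\<And>e. e \<in> G \<Longrightarrow> (L e)-lipschitz_on UNIV _\<close> \<open>\<And>e. e \<in> G \<Longrightarrow> geodesically_convex _\<close>
    by (intro stochastic_proximal_point.intro stochastic_proximal_point_axioms.intro) auto
  have "integral_fun M f y = ereal (\<integral>e. real_of_ereal (f e y) \<partial>M)" for y
    unfolding integral_fun_def using G(2) finite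
    by (intro ereal_integral_eq_integral[OF stochastic_proximal_point.integrable_h[OF S]])
      (auto elim!: eventually_mono)
  with S finite show ?thesis by (rule that)
qed

theorem lemma5p6:
  fixes M :: "'e measure" and P :: "'w measure"
    and f :: "'e \<Rightarrow> 'a::metric_space \<Rightarrow> ereal"
    and x0 :: 'a and lam :: "nat \<Rightarrow> real"
    and \<xi> :: "nat \<Rightarrow> 'w \<Rightarrow> 'e" and x :: "nat \<Rightarrow> 'w \<Rightarrow> 'a"
    and L :: "'e \<Rightarrow> real" and z :: 'a and b T :: real
    and \<theta> :: "nat \<Rightarrow> real \<Rightarrow> nat"
  assumes "prob_space M" and "complete_measure M" and "prob_space P"
    and "hadamard_space TYPE('a)" and "separable_space TYPE('a)"
    and "normal_convex_integrand M f"
    and "proper_fun (integral_fun M f)"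
    and "argmin_set (integral_fun M f) \<noteq> {}"
    and "\<And>n. lam n > 0" and "\<not> summable lam" and "summable (\<lambda>n. (lam n)\<^sup>2)"
    and "\<And>n. \<xi> (Suc n) \<in> measurable P M"
    and "prob_space.indep_vars P (\<lambda>_. M) (\<lambda>n. \<xi> (Suc n)) UNIV"
    and "\<And>n. distr P M (\<xi> (Suc n)) = M"
    and "\<And>\<omega>. \<omega> \<in> space P \<Longrightarrow> x 0 \<omega> = x0"
    and "\<And>n \<omega>. \<omega> \<in> space P \<Longrightarrow> x (Suc n) \<omega> \<in> prox f (lam n) (\<xi> (Suc n) \<omega>) (x n \<omega>)"
    and "\<And>e. e \<in> space M \<Longrightarrow> L e > 0"
    and "L \<in> borel_measurable M" and "integrable M (\<lambda>e. (L e)\<^sup>2)"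
    and "AE e in M. \<forall>u v. f e u \<le> f e v + ereal (L e * dist u v)"
    and "z \<in> argmin_set (integral_fun M f)"
    and "b > (dist x0 z)\<^sup>2"
    and "\<And>b' k. b' > 0 \<Longrightarrow> (\<Sum>n = k..\<theta> k b'. lam n) \<ge> b'"
    and "T > (\<Sum>n. (lam n)\<^sup>2)"
  shows "\<forall>\<epsilon>>0. \<forall>N. \<exists>n. N \<le> n \<and>
           n \<le> \<theta> N ((b + 4 * (\<integral>e. (L e)\<^sup>2 \<partial>M) * T) / \<epsilon>) \<and>
           (\<integral>\<^sup>+ \<omega>. e2ennreal (integral_fun M f (x n \<omega>) - integral_fun M f z) \<partial>P) < ennreal \<epsilon>"
proof (intro allI impI)
  fix \<epsilon> :: real and N :: nat assume "\<epsilon> > 0"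
  define h where "h = (\<lambda>e y. real_of_ereal (f e y))"
  have L_nonneg: "L e \<ge> 0" if "e \<in> space M" for e using assms(17)[OF that] by simp
  obtain G where "stochastic_proximal_point M P h G L lam (\<lambda>n. \<xi> (Suc n)) z"
    and finite: "\<And>e y. e \<in> G \<Longrightarrow> f e y = ereal (h e y)"
    and integral_fun: "\<And>y. integral_fun M f y = ereal (\<integral>e. h e y \<partial>M)"
    using stochastic_proximal_point_of_integrand[where lam = lam and \<xi> = "\<lambda>n. \<xi> (Suc n)",
        OF assms(1,3-7,21,9,12-14) L_nonneg assms(18-20)]
    unfolding h_def by blast
  then interpret S: stochastic_proximal_point M P h G L lam "\<lambda>n. \<xi> (Suc n)" z x0 by simp
  have excess: "integral_fun M f y - integral_fun M f z = ereal (S.excess y)" for y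
    by (simp add: integral_fun S.excess_eq)
  have z_min: "(\<integral>e. h e z \<partial>M) \<le> (\<integral>e. h e y \<partial>M)" for y
    using assms(21) unfolding argmin_set_def integral_fun by simp
  then obtain n where n: "N \<le> n" "n \<le> \<theta> N ((b + 4 * (\<integral>e. (L e)\<^sup>2 \<partial>M) * T) / \<epsilon>)"
    and small: "(\<integral>\<omega>. S.excess (S.iterates n \<omega>) \<partial>P) < \<epsilon>"
    using S.expected_excess_small_in_window[OF z_min assms(22,11,24,23) \<open>\<epsilon> > 0\<close>] by blast
  have "AE \<omega> in P. \<forall>n. x n \<omega> = S.iterates n \<omega>"
  proof (rule S.AE_eq_iterates)
    fix n \<omega> assume "\<omega> \<in> space P" "\<xi> (Suc n) \<omega> \<in> G"
    show "is_prox_point (h (\<xi> (Suc n) \<omega>)) (lam n) (x n \<omega>) (x (Suc n) \<omega>)"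
      by (rule is_prox_point_if_mem_prox[OF finite assms(16)]) fact+
  qed (rule assms(15))
  then have "(\<integral>\<^sup>+ \<omega>. e2ennreal (integral_fun M f (x n \<omega>) - integral_fun M f z) \<partial>P)
      = (\<integral>\<^sup>+ \<omega>. ennreal (S.excess (S.iterates n \<omega>)) \<partial>P)"
    by (intro nn_integral_cong_AE) (simp add: excess eventually_mono)
  also have "\<dots> = ennreal (\<integral>\<omega>. S.excess (S.iterates n \<omega>) \<partial>P)"
    using S.integrable_excess_iterates z_min by (intro nn_integral_eq_integral) (auto simp: S.excess_eq)
  also have "\<dots> < ennreal \<epsilon>" using small \<open>\<epsilon> > 0\<close> by (rule ennreal_lessI[rotated])
  finally show "\<exists>n. N \<le> n \<and> n \<le> \<theta> N ((b + 4 * (\<integral>e. (L e)\<^sup>2 \<partial>M) * T) / \<epsilon>) \<and>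
      (\<integral>\<^sup>+ \<omega>. e2ennreal (integral_fun M f (x n \<omega>) - integral_fun M f z) \<partial>P) < ennreal \<epsilon>"
    using n by blast
qed

end
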